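(* There exists a constant $\mu$ with $0<\mu<1/2$ such that for every $r>0$ the spiral $\gamma:\mathbb{R}\to\mathbb{R}^3$, $\gamma(t)=(r\cos t,\,r\sin t,\,\mu r t)$, is self-expanded (and hence satisfies the $\lambda$-cone property for all $\lambda\in[0,1)$).
   Context: $\mathbb{R}^3$ carries the Euclidean inner product $\langle\cdot,\cdot\rangle$ and norm $\|\cdot\|$. A curve $\gamma$ defined on an interval is self-expanded if for all $t_1\le t_2\le t_3$: $\|\gamma(t_1)-\gamma(t_2)\|\le\|\gamma(t_1)-\gamma(t_3)\|$. A differentiable curve with nonvanishing derivative satisfies the $\lambda$-cone property if for all $t<\tau$: $\langle\gamma'(\tau),\gamma(t)-\gamma(\tau)\rangle\le\lambda\|\gamma'(\tau)\|\|\gamma(t)-\gamma(\tau)\|$. *)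

theory Defs
  imports "HOL-Analysis.Analysis"
begin

definition self_expanded :: "real set \<Rightarrow> (real \<Rightarrow> real^3) \<Rightarrow> bool" where
  "self_expanded I \<gamma> \<longleftrightarrow>
     (\<forall>t1\<in>I. \<forall>t2\<in>I. \<forall>t3\<in>I. t1 \<le> t2 \<and> t2 \<le> t3 \<longrightarrow>
        norm (\<gamma> t1 - \<gamma> t2) \<le> norm (\<gamma> t1 - \<gamma> t3))"

definition cone_property :: "real \<Rightarrow> real set \<Rightarrow> (real \<Rightarrow> real^3) \<Rightarrow> bool" where
  "cone_property lam I \<gamma> \<longleftrightarrow>
     (\<forall>t\<in>I. \<gamma> differentiable (at t within I) \<and> vector_derivative \<gamma> (at t within I) \<noteq> 0) \<and>
     (\<forall>t\<in>I. \<forall>\<tau>\<in>I. t < \<tau> \<longrightarrow>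
        inner (vector_derivative \<gamma> (at \<tau> within I)) (\<gamma> t - \<gamma> \<tau>)
          \<le> lam * norm (vector_derivative \<gamma> (at \<tau> within I)) * norm (\<gamma> t - \<gamma> \<tau>))"

definition spiral :: "real \<Rightarrow> real \<Rightarrow> real \<Rightarrow> real^3" where
  "spiral \<mu> r t = vector [r * cos t, r * sin t, \<mu> * r * t]"

end

theory Submission
  imports Defs
begin

text \<open>With \<open>d = b - a\<close>, the squared distance between two points of the spiral is
  \<open>r\<^sup>2 (2 + \<mu>\<^sup>2 d\<^sup>2 - 2 cos d)\<close>, whose derivative in \<open>d\<close> is \<open>2 r\<^sup>2 (sin d + \<mu>\<^sup>2 d)\<close>.
  This is nonnegative for \<open>d \<ge> 0\<close> once \<open>\<mu>\<^sup>2 (1 + \<pi>) \<ge> 1\<close>: trivially for \<open>d \<le> \<pi>\<close> or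
  \<open>\<mu>\<^sup>2 d \<ge> 1\<close>, and through \<open>sin d \<ge> \<pi> - d\<close> in between; \<open>\<mu> = 0.499\<close> qualifies.
  The cone property follows from self-expansion alone: for \<open>t < \<tau>\<close> the function
  \<open>s \<mapsto> |\<gamma> t - \<gamma> s|\<^sup>2\<close> is nondecreasing on \<open>[t, \<infinity>)\<close>, so its derivative
  \<open>-2 \<langle>\<gamma>'(\<tau>), \<gamma> t - \<gamma> \<tau>\<rangle>\<close> at \<open>\<tau>\<close> is nonnegative.\<close>

lemma sin_plus_linear_nonneg:
  fixes c s :: real
  assumes c: "1 \<le> c * (1 + pi)" and s: "0 \<le> s"
  shows "0 \<le> sin s + c * s"
proof -
  have c_pos: "0 < c"
    using c pi_gt3 by (smt (verit) mult_nonpos_nonneg)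
  consider "s \<le> pi" | "1 \<le> c * s" | "pi < s" "c * s < 1"
    by linarith
  then show ?thesis
  proof cases
    case 1
    then show ?thesis using sin_ge_zero[of s] s c_pos by simp
  next
    case 2
    then show ?thesis using sin_ge_minus_one[of s] by linarith
  next
    case 3
    have "s * (1 - c) \<le> pi"
    proof (cases "c \<le> 1")
      case True
      have "(c * s) * (1 - c) \<le> 1 * (1 - c)"
        using 3 True by (intro mult_right_mono) auto
      then have "c * (s * (1 - c)) \<le> c * pi"
        using c by (simp add: algebra_simps)
      then show ?thesis using c_pos by simp
    next
      case False
      then have "s * (1 - c) \<le> 0" using s by (simp add: mult_nonneg_nonpos)
      then show ?thesis using pi_gt_zero by linarith
    qed
    then have "s - pi \<le> c * s" by (simp add: algebra_simps)
    moreover have "sin s = - sin (s - pi)" by (simp add: sin_diff)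
    moreover have "sin (s - pi) \<le> s - pi" using sin_x_le_x[of "s - pi"] 3 by simp
    ultimately show ?thesis by linarith
  qed
qed

lemma self_expanded_imp_inner_derivative_nonpos:
  assumes "self_expanded UNIV \<gamma>" and "(\<gamma> has_vector_derivative \<gamma>') (at \<tau>)" and "t < \<tau>"
  shows "inner \<gamma>' (\<gamma> t - \<gamma> \<tau>) \<le> 0"
proof -
  define f where "f s = inner (\<gamma> t - \<gamma> s) (\<gamma> t - \<gamma> s)" for s
  have "mono_on {t..} f"
  proof (rule mono_onI)
    fix s s' assume "s \<in> {t..}" "s' \<in> {t..}" "s \<le> s'"
    then have "norm (\<gamma> t - \<gamma> s) \<le> norm (\<gamma> t - \<gamma> s')"
      using assms(1) unfolding self_expanded_def by auto
    then show "f s \<le> f s'"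
      unfolding f_def by (simp flip: power2_norm_eq_inner add: power_mono)
  qed
  moreover have "(f has_real_derivative - 2 * inner \<gamma>' (\<gamma> t - \<gamma> \<tau>)) (at \<tau>)"
    using assms(2) unfolding f_def has_vector_derivative_def has_field_derivative_def
    by (auto intro!: derivative_eq_intros simp: algebra_simps inner_commute)
  ultimately have "0 \<le> - 2 * inner \<gamma>' (\<gamma> t - \<gamma> \<tau>)"
    by (rule mono_on_imp_deriv_nonneg) (use assms(3) in simp)
  then show ?thesis by simp
qed

lemma cone_property_of_self_expanded:
  assumes "self_expanded UNIV \<gamma>"
    and deriv: "\<And>t. (\<gamma> has_vector_derivative \<gamma>' t) (at t)"
    and "\<And>t. \<gamma>' t \<noteq> 0" and "0 \<le> lam"
  shows "cone_property lam UNIV \<gamma>"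
  unfolding cone_property_def
proof (intro conjI ballI impI)
  fix t \<tau> :: real
  have vd: "vector_derivative \<gamma> (at s within UNIV) = \<gamma>' s" for s
    using vector_derivative_at[OF deriv] by simp
  show "\<gamma> differentiable at t within UNIV"
    using deriv differentiable_def has_vector_derivative_def by blast
  show "vector_derivative \<gamma> (at t within UNIV) \<noteq> 0"
    using vd assms(3) by simp
  assume "t < \<tau>"
  then have "inner (\<gamma>' \<tau>) (\<gamma> t - \<gamma> \<tau>) \<le> 0"
    using self_expanded_imp_inner_derivative_nonpos assms(1) deriv by blast
  also have "0 \<le> lam * norm (\<gamma>' \<tau>) * norm (\<gamma> t - \<gamma> \<tau>)"
    using assms(4) by simp
  finally show "inner (vector_derivative \<gamma> (at \<tau> within UNIV)) (\<gamma> t - \<gamma> \<tau>)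
      \<le> lam * norm (vector_derivative \<gamma> (at \<tau> within UNIV)) * norm (\<gamma> t - \<gamma> \<tau>)"
    by (simp add: vd)
qed

lemma cos_plus_quadratic_mono:
  fixes c a b :: real
  assumes c: "1 \<le> c * (1 + pi)" and "0 \<le> a" "a \<le> b"
  shows "c * a\<^sup>2 - 2 * cos a \<le> c * b\<^sup>2 - 2 * cos b"
proof (rule DERIV_nonneg_imp_increasing_open[OF \<open>a \<le> b\<close>])
  fix x assume "a < x" "x < b"
  have "((\<lambda>x. c * x\<^sup>2 - 2 * cos x) has_real_derivative 2 * (sin x + c * x)) (at x)"
    by (auto intro!: derivative_eq_intros simp: algebra_simps)
  moreover have "0 \<le> 2 * (sin x + c * x)"
    using sin_plus_linear_nonneg[OF c, of x] \<open>0 \<le> a\<close> \<open>a < x\<close> by simp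
  ultimately show "\<exists>y. ((\<lambda>x. c * x\<^sup>2 - 2 * cos x) has_real_derivative y) (at x) \<and> 0 \<le> y"
    by blast
qed (intro continuous_intros)

lemma norm_spiral_diff:
  "norm (spiral \<mu> r a - spiral \<mu> r b) = \<bar>r\<bar> * sqrt (2 + \<mu>\<^sup>2 * (b - a)\<^sup>2 - 2 * cos (b - a))"
proof -
  have "(norm (spiral \<mu> r a - spiral \<mu> r b))\<^sup>2 =
      (r * cos a - r * cos b)\<^sup>2 + (r * sin a - r * sin b)\<^sup>2 + (\<mu> * r * a - \<mu> * r * b)\<^sup>2"
    unfolding power2_norm_eq_inner inner_vec_def sum_3 spiral_def
    by (simp add: power2_eq_square)
  also have "\<dots> = r\<^sup>2 * (2 + \<mu>\<^sup>2 * (b - a)\<^sup>2 - 2 * cos (b - a))"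
    using sin_cos_squared_add3[of a] sin_cos_squared_add3[of b]
    unfolding cos_diff power2_eq_square by algebra
  finally show ?thesis
    by (metis norm_ge_zero real_sqrt_abs real_sqrt_mult real_sqrt_unique)
qed

lemma self_expanded_spiral:
  assumes "1 \<le> \<mu>\<^sup>2 * (1 + pi)"
  shows "self_expanded UNIV (spiral \<mu> r)"
  unfolding self_expanded_def
proof (intro ballI impI)
  fix t1 t2 t3 :: real assume "t1 \<le> t2 \<and> t2 \<le> t3"
  then have "\<mu>\<^sup>2 * (t2 - t1)\<^sup>2 - 2 * cos (t2 - t1) \<le> \<mu>\<^sup>2 * (t3 - t1)\<^sup>2 - 2 * cos (t3 - t1)"
    by (intro cos_plus_quadratic_mono[OF assms]) auto
  then show "norm (spiral \<mu> r t1 - spiral \<mu> r t2) \<le> norm (spiral \<mu> r t1 - spiral \<mu> r t3)"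
    unfolding norm_spiral_diff by (simp add: mult_left_mono)
qed

lemma spiral_has_vector_derivative:
  "(spiral \<mu> r has_vector_derivative vector [- r * sin t, r * cos t, \<mu> * r]) (at t)"
proof -
  have "spiral \<mu> r = (\<lambda>t. (r * cos t) *\<^sub>R axis 1 1 + (r * sin t) *\<^sub>R axis 2 1 + (\<mu> * r * t) *\<^sub>R axis 3 1)"
    by (rule ext) (simp add: spiral_def vec_eq_iff forall_3 axis_def)
  moreover have "vector [- r * sin t, r * cos t, \<mu> * r] =
      (- r * sin t) *\<^sub>R axis 1 1 + (r * cos t) *\<^sub>R axis 2 1 + (\<mu> * r) *\<^sub>R (axis 3 1 :: real^3)"
    by (simp add: vec_eq_iff forall_3 axis_def)
  ultimately show ?thesis
    by (auto intro!: derivative_eq_intros simp: algebra_simps)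
qed

theorem lemma4p4:
  shows "\<exists>\<mu>::real. 0 < \<mu> \<and> \<mu> < 1/2 \<and>
    (\<forall>r::real. r > 0 \<longrightarrow>
       self_expanded UNIV (spiral \<mu> r) \<and>
       (\<forall>lam::real. 0 \<le> lam \<and> lam < 1 \<longrightarrow> cone_property lam UNIV (spiral \<mu> r)))"
proof -
  define \<mu> :: real where "\<mu> = 499/1000"
  have "3.14 \<le> pi" using pi_approx(1) by simp
  then have \<mu>: "1 \<le> \<mu>\<^sup>2 * (1 + pi)"
    unfolding \<mu>_def power2_eq_square by (simp add: algebra_simps)
  have "self_expanded UNIV (spiral \<mu> r) \<and> cone_property lam UNIV (spiral \<mu> r)"
    if "r > 0" "0 \<le> lam" for r lam
  proof
    show self_expanded: "self_expanded UNIV (spiral \<mu> r)"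
      using self_expanded_spiral[OF \<mu>] .
    have "vector [- r * sin t, r * cos t, \<mu> * r] \<noteq> (0 :: real^3)" for t
      using \<open>r > 0\<close> unfolding \<mu>_def by (simp add: vec_eq_iff forall_3)
    then show "cone_property lam UNIV (spiral \<mu> r)"
      using cone_property_of_self_expanded[OF self_expanded spiral_has_vector_derivative]
        \<open>0 \<le> lam\<close> by blast
  qed
  moreover have "0 < \<mu>" "\<mu> < 1/2" unfolding \<mu>_def by simp_all
  ultimately show ?thesis by blast
qed

end
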